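(* Let $\{(\varrho_i^k,u^k_{i-1/2})\}$ be a numerical solution of the scheme. Then for every $m=1,\dots,M$ there exist numbers $\varrho^*_{i,k}$ between $\varrho_i^{k-1}$ and $\varrho_i^k$ and $\theta^k_{i+1/2}$ between $\varrho_i^k$ and $\varrho_{i+1}^k$ such that $$\Delta x\sum_{i=0}^{N-1}\Big(\varrho_i^m\frac{|\widehat u_i^m|^2}2+\frac{p(\varrho_i^m)}{\gamma-1}\Big)+\mu\,\Delta t\,\Delta x\sum_{k=1}^m\sum_{i=0}^{N-1}|\partial_iu^k|^2+\mathcal N_1+\mathcal N_2+\mathcal N_3+\mathcal N_4=\Delta x\sum_{i=0}^{N-1}\Big(\varrho_i^0\frac{|\widehat u_i^0|^2}2+\frac{p(\varrho_i^0)}{\gamma-1}\Big),$$ where $\mathcal N_1=\frac{(\Delta t)^2\Delta x}{2(\gamma-1)}\sum_{k=1}^m\sum_{i=0}^{N-1}p''(\varrho^*_{i,k})|\partial_t^k\varrho_i|^2$, $\mathcal N_2=\frac{\Delta t(\Delta x)^2}{2(\gamma-1)}\sum_{k=1}^m\sum_{i=0}^{N-2}p''(\theta^k_{i+1/2})|\partial_{i+1/2}\varrho^k|^2|u^k_{i+1/2}|$, $\mathcal N_3=\frac{(\Delta t)^2\Delta x}{2}\sum_{k=1}^m\sum_{i=0}^{N-1}\varrho_i^{k-1}|\partial_t^k\widehat u_i|^2$, $\mathcal N_4=\frac{\Delta t(\Delta x)^2}{2}\sum_{k=1}^m\sum_{i=0}^{N-2}|\operatorname{Up}(\varrho^ku^k)_{i+1/2}|\,|\partial_{i+1/2}\widehat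 u^k|^2$. In particular all $\mathcal N_j\ge0$.
   Context: Fix $L>0$, $\mu>0$, $a>0$, $\gamma>1$, $p(\varrho)=a\varrho^\gamma$, $T>0$, integers $N,M\ge1$, $\Delta x=L/N$, $\Delta t=T/M$. Nodes $x_{i-1/2}=i\Delta x$ ($i=0,\dots,N$), cells $[x_{i-1/2},x_{i+1/2}]$ ($i=0,\dots,N-1$). Unknowns $\varrho_i^k$ ($i=0,\dots,N-1$), $u^k_{i-1/2}$ ($i=0,\dots,N$), $k=0,\dots,M$, with $u^k_{-1/2}=u^k_{N-1/2}=0$ for $k\ge1$. Notation: $z^+=\max\{z,0\}$, $z^-=\min\{z,0\}$; $\widehat u_i=\frac{u_{i-1/2}+u_{i+1/2}}2$; for $i=0,\dots,N-2$, $\operatorname{Up}(\varrho u)_{i+1/2}=\varrho_iu^+_{i+1/2}+\varrho_{i+1}u^-_{i+1/2}$, $\operatorname{Up}(\varrho\widehat uu)_{i+1/2}=\varrho_i\widehat u_iu^+_{i+1/2}+\varrho_{i+1}\widehat u_{i+1}u^-_{i+1/2}$, and both fluxes vanish at nodes $-1/2$, $N-1/2$; $\partial_{i+1/2}f=(f_{i+1}-f_i)/\Delta x$ (cell quantities), $\partial_iv=(v_{i+1/2}-v_{i-1/2})/\Delta x$ (nodal quantities), $\Delta_{i+1/2}u=(u_{i-1/2}-2u_{i+1/2}+u_{i+3/2})/\Delta x^2$, $\partial_t^kf=(f^k-f^{k-1})/\Delta t$. Initial values: $\varrho_0\in L^\gamma(0,L)$, $\varrho_0>0$, $u_0$ bounded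 on $[0,L]$; $\varrho_i^0=\frac1{\Delta x}\int_{x_{i-1/2}}^{x_{i+1/2}}\varrho_0$, $u^0_{i-1/2}=u_0(x_{i-1/2})$. The scheme, for $k=1,\dots,M$: $\partial_t^k\varrho_i+\partial_i\operatorname{Up}(\varrho^ku^k)=0$ ($i=0,\dots,N-1$) and $\partial_t^k\big(\frac{\varrho_i\widehat u_i+\varrho_{i+1}\widehat u_{i+1}}2\big)+\frac{\operatorname{Up}(\varrho^k\widehat u^ku^k)_{i+3/2}-\operatorname{Up}(\varrho^k\widehat u^ku^k)_{i-1/2}}{2\Delta x}=\mu\Delta_{i+1/2}u^k-\partial_{i+1/2}p(\varrho^k)$ ($i=0,\dots,N-2$). A numerical solution is any collection of numbers solving this system; its densities are strictly positive. *)

theory Defs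
  imports "HOL-Analysis.Analysis"
begin

text \<open>Conventions. Densities: rho k i = rho_i^k (i = 0..N-1).
  Velocities: u k j = u^k_{j-1/2} (node j, j = 0..N), so u^k_{i+1/2} = u k (i+1).\<close>

definition pres :: "real \<Rightarrow> real \<Rightarrow> real \<Rightarrow> real" where
  "pres a \<gamma> r = a * r powr \<gamma>"

text \<open>Second derivative of p(r) = a r^gamma (for r > 0).\<close>
definition pres2 :: "real \<Rightarrow> real \<Rightarrow> real \<Rightarrow> real" where
  "pres2 a \<gamma> r = a * \<gamma> * (\<gamma> - 1) * r powr (\<gamma> - 2)"

definition pospart :: "real \<Rightarrow> real" where "pospart z = max z 0"
definition negpart :: "real \<Rightarrow> real" where "negpart z = min z 0"

definition uhat :: "(nat \<Rightarrow> real) \<Rightarrow> nat \<Rightarrow> real" where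
  "uhat v i = (v i + v (i+1)) / 2"

definition UpRU :: "nat \<Rightarrow> (nat \<Rightarrow> real) \<Rightarrow> (nat \<Rightarrow> real) \<Rightarrow> nat \<Rightarrow> real" where
  "UpRU N r v j = (if j = 0 \<or> j \<ge> N then 0
      else r (j-1) * pospart (v j) + r j * negpart (v j))"

definition UpRUU :: "nat \<Rightarrow> (nat \<Rightarrow> real) \<Rightarrow> (nat \<Rightarrow> real) \<Rightarrow> nat \<Rightarrow> real" where
  "UpRUU N r v j = (if j = 0 \<or> j \<ge> N then 0
      else r (j-1) * uhat v (j-1) * pospart (v j) + r j * uhat v j * negpart (v j))"

definition between :: "real \<Rightarrow> real \<Rightarrow> real \<Rightarrow> bool" where
  "between x y z \<longleftrightarrow> min x y \<le> z \<and> z \<le> max x y"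

definition energy :: "real \<Rightarrow> real \<Rightarrow> nat \<Rightarrow> real \<Rightarrow> (nat \<Rightarrow> real) \<Rightarrow> (nat \<Rightarrow> real) \<Rightarrow> real" where
  "energy a \<gamma> N dx r v = dx * (\<Sum>i<N. r i * (uhat v i)\<^sup>2 / 2 + pres a \<gamma> (r i) / (\<gamma> - 1))"

definition num_solution ::
  "real \<Rightarrow> real \<Rightarrow> real \<Rightarrow> real \<Rightarrow> nat \<Rightarrow> nat \<Rightarrow> real \<Rightarrow> real \<Rightarrow>
   (real \<Rightarrow> real) \<Rightarrow> (real \<Rightarrow> real) \<Rightarrow> (nat \<Rightarrow> nat \<Rightarrow> real) \<Rightarrow> (nat \<Rightarrow> nat \<Rightarrow> real) \<Rightarrow> bool" where
  "num_solution \<mu> a \<gamma> L N M dx dt rho0 u0 rho u \<longleftrightarrow>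
     (\<forall>i<N. rho 0 i = (1/dx) * (LINT x:{real i * dx .. real (i+1) * dx}|lborel. rho0 x)) \<and>
     (\<forall>j\<le>N. u 0 j = u0 (real j * dx)) \<and>
     (\<forall>k\<in>{1..M}. u k 0 = 0 \<and> u k N = 0) \<and>
     (\<forall>k\<in>{1..M}. \<forall>i<N.
        (rho k i - rho (k-1) i) / dt
        + (UpRU N (rho k) (u k) (i+1) - UpRU N (rho k) (u k) i) / dx = 0) \<and>
     (\<forall>k\<in>{1..M}. \<forall>i<N-1.
        ((rho k i * uhat (u k) i + rho k (i+1) * uhat (u k) (i+1)) / 2
          - (rho (k-1) i * uhat (u (k-1)) i + rho (k-1) (i+1) * uhat (u (k-1)) (i+1)) / 2) / dt
        + (UpRUU N (rho k) (u k) (i+2) - UpRUU N (rho k) (u k) i) / (2 * dx)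
        = \<mu> * (u k i - 2 * u k (i+1) + u k (i+2)) / dx\<^sup>2
          - (pres a \<gamma> (rho k (i+1)) - pres a \<gamma> (rho k i)) / dx)"

end

theory Submission
  imports Defs
begin

(*
  Testing the discrete mass equation against the enthalpy h(rho^k) and against |hat u^k|^2/2,
  and the momentum equation against u^k, then summing by parts (all fluxes vanish at the two
  boundary nodes), gives an exact one-step energy balance. Its pressure defects are Bregman
  divergences of the potential H(rho) = p(rho)/(gamma-1): one per cell in time, and one per node
  taken from the upwind side, because the mass flux is upwinded and p = rho H' - H. The kinetic
  defects are the squared time and space increments of hat u, weighted by rho^(k-1) and by
  |Up(rho u)|. Taylor's theorem writes each Bregman divergence as p''/(2(gamma-1)) at an
  intermediate density times a square, and the balances telescope over the time levels.
*)

lemma sum_by_parts_zero_boundary: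
  fixes c F :: "nat \<Rightarrow> 'a::comm_ring"
  assumes "F 0 = 0" "F N = 0"
  shows "(\<Sum>i<N. c i * (F (i + 1) - F i)) = - (\<Sum>i<N - 1. F (i + 1) * (c (i + 1) - c i))"
proof (cases N)
  case (Suc n)
  have "(\<Sum>i<N. c i * F (i + 1)) = (\<Sum>i<n. c i * F (i + 1))"
    using assms Suc by simp
  moreover have "(\<Sum>i<N. c i * F i) = (\<Sum>i<n. c (i + 1) * F (i + 1))"
    using assms Suc by (simp add: sum.lessThan_Suc_shift del: sum.lessThan_Suc)
  ultimately show ?thesis
    using Suc by (simp add: algebra_simps sum_subtractf)
qed simp

lemma sum_node_average:
  fixes v m :: "nat \<Rightarrow> real"
  assumes "v 0 = 0" "v N = 0"
  shows "(\<Sum>i<N - 1. v (i + 1) * (m i + m (i + 1)) / 2) = (\<Sum>i<N. m i * uhat v i)"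
proof (cases N)
  case (Suc n)
  have "(\<Sum>i<N. m i * v i) = (\<Sum>i<n. m (i + 1) * v (i + 1))"
    using assms Suc by (simp add: sum.lessThan_Suc_shift del: sum.lessThan_Suc)
  moreover have "(\<Sum>i<N. m i * v (i + 1)) = (\<Sum>i<n. m i * v (i + 1))"
    using assms Suc by simp
  ultimately show ?thesis
    using Suc by (simp add: uhat_def algebra_simps sum.distrib add_divide_distrib
        flip: sum_divide_distrib)
qed simp

lemma sum_centered_difference:
  fixes v G :: "nat \<Rightarrow> 'a::comm_ring"
  assumes "v 0 = 0" "v N = 0" "G 0 = 0" "G N = 0"
  shows "(\<Sum>i<N - 1. v (i + 1) * (G (i + 2) - G i)) = (\<Sum>i<N - 1. G (i + 1) * (v i - v (i + 2)))"
proof (cases N)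
  case (Suc n)
  have "(\<Sum>i<n. v (i + 1) * G (i + 2)) = (\<Sum>i<n. G (i + 1) * v i)"
  proof -
    have "(\<Sum>i<n. v (i + 1) * G (i + 2)) = (\<Sum>i<Suc n. v i * G (i + 1))"
      using assms Suc by (simp add: sum.lessThan_Suc_shift del: sum.lessThan_Suc)
    also have "\<dots> = (\<Sum>i<n. G (i + 1) * v i)"
      using assms Suc by (simp add: mult.commute)
    finally show ?thesis .
  qed
  moreover have "(\<Sum>i<n. v (i + 1) * G i) = (\<Sum>i<n. G (i + 1) * v (i + 2))"
  proof -
    have "(\<Sum>i<n. v (i + 1) * G i) = (\<Sum>i<Suc n. v (i + 1) * G i)"
      using assms Suc by simp
    also have "\<dots> = (\<Sum>i<n. G (i + 1) * v (i + 2))"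
      using assms Suc by (simp add: sum.lessThan_Suc_shift mult.commute del: sum.lessThan_Suc)
    finally show ?thesis .
  qed
  ultimately show ?thesis
    using Suc by (simp add: right_diff_distrib sum_subtractf)
qed simp

lemma sum_discrete_laplacian:
  fixes v :: "nat \<Rightarrow> 'a::comm_ring_1"
  assumes "v 0 = 0" "v N = 0"
  shows "(\<Sum>i<N - 1. v (i + 1) * (v i - 2 * v (i + 1) + v (i + 2))) = - (\<Sum>i<N. (v (i + 1) - v i)\<^sup>2)"
  using sum_by_parts_zero_boundary[of v N "\<lambda>i. v (i + 1) - v i"] assms
  by (simp add: power2_eq_square algebra_simps)

lemma add_sum_telescope:
  fixes E d :: "nat \<Rightarrow> 'a::ab_group_add"
  assumes "\<And>k. k \<in> {1..m} \<Longrightarrow> E k + d k = E (k - 1)"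
  shows "E m + (\<Sum>k\<in>{1..m}. d k) = E 0"
  using assms
proof (induction m)
  case (Suc m)
  have "E (Suc m) + (\<Sum>k\<in>{1..Suc m}. d k) = (E (Suc m) + d (Suc m)) + (\<Sum>k\<in>{1..m}. d k)"
    by (simp add: add_ac)
  also have "\<dots> = E m + (\<Sum>k\<in>{1..m}. d k)" using Suc.prems by simp
  also have "\<dots> = E 0" using Suc by simp
  finally show ?case .
qed simp

lemma choice2:
  assumes "\<forall>i k. A i k \<longrightarrow> (\<exists>t. P i k t)"
  obtains f where "\<And>i k. A i k \<Longrightarrow> P i k (f i k)"
proof -
  have "\<forall>i. \<exists>g. \<forall>k. A i k \<longrightarrow> P i k (g k)" using assms by (auto intro!: choice)
  then obtain f where "\<forall>i k. A i k \<longrightarrow> P i k (f i k)" by (auto dest!: choice)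
  then show ?thesis using that by blast
qed

lemma upwind_kinetic_identity:
  fixes rl rr wl wr v :: real
  assumes "rl \<ge> 0" "rr \<ge> 0"
  shows "(rl * pospart v + rr * negpart v) * (wr\<^sup>2 - wl\<^sup>2) / 2
           - (rl * wl * pospart v + rr * wr * negpart v) * (wr - wl)
         = \<bar>rl * pospart v + rr * negpart v\<bar> * (wr - wl)\<^sup>2 / 2"
proof (cases "v \<ge> 0")
  case True
  then show ?thesis
    using assms by (simp add: pospart_def negpart_def power2_eq_square field_simps)
next
  case False
  then have "rr * v \<le> 0" using assms(2) by (simp add: mult_nonneg_nonpos)
  with False show ?thesis
    by (simp add: pospart_def negpart_def power2_eq_square field_simps)
qed

definition bregman :: "(real \<Rightarrow> real) \<Rightarrow> (real \<Rightarrow> real) \<Rightarrow> real \<Rightarrow> real \<Rightarrow> real" where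
  "bregman H h x y = H x - H y - h y * (x - y)"

(* v is the velocity at the node between the densities x (left) and y (right); the divergence
   is that of the upwind density from the downwind one. *)
definition upwind_bregman ::
  "(real \<Rightarrow> real) \<Rightarrow> (real \<Rightarrow> real) \<Rightarrow> real \<Rightarrow> real \<Rightarrow> real \<Rightarrow> real" where
  "upwind_bregman H h v x y = pospart v * bregman H h x y - negpart v * bregman H h y x"

lemma bregman_upwind_identity:
  assumes "P x = x * h x - H x" "P y = y * h y - H y"
  shows "v * (P y - P x) - (x * pospart v + y * negpart v) * (h y - h x)
         = upwind_bregman H h v x y"
  unfolding assms by (cases "v \<ge> 0")
    (simp_all add: upwind_bregman_def bregman_def pospart_def negpart_def algebra_simps)

definition pres_potential :: "real \<Rightarrow> real \<Rightarrow> real \<Rightarrow> real" where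
  "pres_potential a \<gamma> r = pres a \<gamma> r / (\<gamma> - 1)"

definition enthalpy :: "real \<Rightarrow> real \<Rightarrow> real \<Rightarrow> real" where
  "enthalpy a \<gamma> r = a * \<gamma> / (\<gamma> - 1) * r powr (\<gamma> - 1)"

lemma pres_legendre:
  assumes "r > 0" "\<gamma> \<noteq> 1"
  shows "pres a \<gamma> r = r * enthalpy a \<gamma> r - pres_potential a \<gamma> r"
proof -
  have "r * r powr (\<gamma> - 1) = r powr \<gamma>"
    using assms(1) by (simp add: powr_diff powr_one_gt_zero_iff)
  then have "r * enthalpy a \<gamma> r - pres_potential a \<gamma> r
      = (a * \<gamma> / (\<gamma> - 1) - a / (\<gamma> - 1)) * r powr \<gamma>"
    by (simp add: enthalpy_def pres_potential_def pres_def algebra_simps)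
  also have "a * \<gamma> / (\<gamma> - 1) - a / (\<gamma> - 1) = a"
  proof -
    have "a * \<gamma> / (\<gamma> - 1) - a / (\<gamma> - 1) = a * (\<gamma> - 1) / (\<gamma> - 1)"
      by (simp add: diff_divide_distrib algebra_simps)
    with assms(2) show ?thesis by simp
  qed
  finally show ?thesis by (simp add: pres_def)
qed

lemma pres2_nonneg: "a \<ge> 0 \<Longrightarrow> \<gamma> \<ge> 1 \<Longrightarrow> pres2 a \<gamma> t \<ge> 0"
  by (simp add: pres2_def)

lemma bregman_pres_potential_taylor:
  assumes "x > 0" "y > 0" "\<gamma> > 1"
  shows "\<exists>t. between x y t \<and>
    bregman (pres_potential a \<gamma>) (enthalpy a \<gamma>) x y = pres2 a \<gamma> t / (2 * (\<gamma> - 1)) * (x - y)\<^sup>2"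
proof (cases "x = y")
  case True
  then show ?thesis by (auto simp: between_def bregman_def)
next
  case False
  define D where "D = (\<lambda>m::nat. if m = 0 then pres_potential a \<gamma> else if m = 1 then enthalpy a \<gamma>
    else (\<lambda>t. pres2 a \<gamma> t / (\<gamma> - 1)))"
  have "DERIV (D m) t :> D (Suc m) t" if "m < 2" "min x y \<le> t" "t \<le> max x y" for m t
  proof -
    have "t > 0" using that assms by linarith
    then have power_rule: "DERIV (\<lambda>t. c * t powr e) t :> c * e * t powr (e - 1)" for c e
      using DERIV_cmult[OF has_real_derivative_powr] by (simp add: mult.assoc)
    from \<open>m < 2\<close> consider "m = 0" | "m = 1" by linarith
    then show ?thesis
    proof cases
      case 1
      have "D 0 = (\<lambda>t. a / (\<gamma> - 1) * t powr \<gamma>)" "D 1 t = a / (\<gamma> - 1) * \<gamma> * t powr (\<gamma> - 1)"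
        by (simp_all add: D_def fun_eq_iff pres_potential_def pres_def enthalpy_def)
      with 1 show ?thesis using power_rule[of "a / (\<gamma> - 1)" \<gamma>] by simp
    next
      case 2
      have "D 1 = (\<lambda>t. a * \<gamma> / (\<gamma> - 1) * t powr (\<gamma> - 1))"
        "D 2 t = a * \<gamma> / (\<gamma> - 1) * (\<gamma> - 1) * t powr (\<gamma> - 1 - 1)"
        by (simp_all add: D_def fun_eq_iff enthalpy_def pres2_def)
      with 2 show ?thesis
        using power_rule[of "a * \<gamma> / (\<gamma> - 1)" "\<gamma> - 1"] by (simp add: numeral_2_eq_2)
    qed
  qed
  then obtain t where t: "if x < y then x < t \<and> t < y else y < t \<and> t < x"
    "D 0 x = (\<Sum>m<2. D m y / fact m * (x - y) ^ m) + D 2 t / fact 2 * (x - y)\<^sup>2"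
    using Taylor[of 2 D "D 0" "min x y" "max x y" y x] False by auto
  have "between x y t" using t(1) by (auto simp: between_def split: if_splits)
  moreover have "bregman (pres_potential a \<gamma>) (enthalpy a \<gamma>) x y = pres2 a \<gamma> t / (2 * (\<gamma> - 1)) * (x - y)\<^sup>2"
    using t(2) by (simp add: D_def bregman_def numeral_2_eq_2)
  ultimately show ?thesis by blast
qed

lemma upwind_bregman_pres_potential_taylor:
  assumes "x > 0" "y > 0" "\<gamma> > 1"
  shows "\<exists>t. between x y t \<and>
    upwind_bregman (pres_potential a \<gamma>) (enthalpy a \<gamma>) v x y
      = \<bar>v\<bar> * pres2 a \<gamma> t / (2 * (\<gamma> - 1)) * (y - x)\<^sup>2"
proof (cases "v \<ge> 0")
  case True
  from bregman_pres_potential_taylor[OF assms] obtain t where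
    "between x y t" "bregman (pres_potential a \<gamma>) (enthalpy a \<gamma>) x y = pres2 a \<gamma> t / (2 * (\<gamma> - 1)) * (x - y)\<^sup>2"
    by blast
  with True show ?thesis
    by (intro exI[of _ t]) (auto simp: upwind_bregman_def pospart_def negpart_def power2_commute)
next
  case False
  from bregman_pres_potential_taylor[OF assms(2,1,3)] obtain t where
    "between y x t" "bregman (pres_potential a \<gamma>) (enthalpy a \<gamma>) y x = pres2 a \<gamma> t / (2 * (\<gamma> - 1)) * (y - x)\<^sup>2"
    by blast
  with False show ?thesis
    by (intro exI[of _ t]) (auto simp: upwind_bregman_def pospart_def negpart_def between_def)
qed

definition mass_step ::
  "nat \<Rightarrow> real \<Rightarrow> real \<Rightarrow> (nat \<Rightarrow> real) \<Rightarrow> (nat \<Rightarrow> real) \<Rightarrow> (nat \<Rightarrow> real) \<Rightarrow> bool" where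
  "mass_step N dx dt r0 r v \<longleftrightarrow>
     (\<forall>i<N. (r i - r0 i) / dt + (UpRU N r v (i+1) - UpRU N r v i) / dx = 0)"

definition momentum_step ::
  "real \<Rightarrow> real \<Rightarrow> real \<Rightarrow> nat \<Rightarrow> real \<Rightarrow> real \<Rightarrow>
   (nat \<Rightarrow> real) \<Rightarrow> (nat \<Rightarrow> real) \<Rightarrow> (nat \<Rightarrow> real) \<Rightarrow> (nat \<Rightarrow> real) \<Rightarrow> bool" where
  "momentum_step \<mu> a \<gamma> N dx dt r0 v0 r v \<longleftrightarrow>
     (\<forall>i<N-1.
        ((r i * uhat v i + r (i+1) * uhat v (i+1)) / 2
          - (r0 i * uhat v0 i + r0 (i+1) * uhat v0 (i+1)) / 2) / dt
        + (UpRUU N r v (i+2) - UpRUU N r v i) / (2 * dx)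
        = \<mu> * (v i - 2 * v (i+1) + v (i+2)) / dx\<^sup>2
          - (pres a \<gamma> (r (i+1)) - pres a \<gamma> (r i)) / dx)"

lemma num_solution_step:
  assumes "num_solution \<mu> a \<gamma> L N M dx dt rho0 u0 rho u" "k \<in> {1..M}"
  shows "mass_step N dx dt (rho (k - 1)) (rho k) (u k)"
    and "momentum_step \<mu> a \<gamma> N dx dt (rho (k - 1)) (u (k - 1)) (rho k) (u k)"
    and "u k 0 = 0" "u k N = 0"
  using assms by (simp_all add: num_solution_def mass_step_def momentum_step_def)

lemma mass_step_weighted_sum:
  assumes "mass_step N dx dt r0 r v" "dx \<noteq> 0" "dt \<noteq> 0"
  shows "dx * (\<Sum>i<N. c i * (r i - r0 i))
         = dt * (\<Sum>i<N - 1. UpRU N r v (i + 1) * (c (i + 1) - c i))"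
proof -
  have mass: "dx * (r i - r0 i) = - dt * (UpRU N r v (i + 1) - UpRU N r v i)" if "i < N" for i
  proof -
    have "(r i - r0 i) / dt + (UpRU N r v (i + 1) - UpRU N r v i) / dx = 0"
      using assms(1) that by (simp add: mass_step_def)
    with assms(2,3) show ?thesis by (simp add: field_simps)
  qed
  have "dx * (\<Sum>i<N. c i * (r i - r0 i)) = (\<Sum>i<N. c i * (dx * (r i - r0 i)))"
    by (simp add: sum_distrib_left algebra_simps)
  also have "\<dots> = (\<Sum>i<N. - dt * (c i * (UpRU N r v (i + 1) - UpRU N r v i)))"
    by (rule sum.cong) (simp_all add: mass)
  also have "\<dots> = - dt * (\<Sum>i<N. c i * (UpRU N r v (i + 1) - UpRU N r v i))"
    by (simp only: sum_distrib_left)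
  also have "\<dots> = dt * (\<Sum>i<N - 1. UpRU N r v (i + 1) * (c (i + 1) - c i))"
    using sum_by_parts_zero_boundary[of "UpRU N r v" N c] by (simp add: UpRU_def)
  finally show ?thesis .
qed

lemma momentum_step_tested:
  assumes "momentum_step \<mu> a \<gamma> N dx dt r0 v0 r v" "dx \<noteq> 0" "dt \<noteq> 0" "v 0 = 0" "v N = 0"
  shows "dx * (\<Sum>i<N. (r i * uhat v i - r0 i * uhat v0 i) * uhat v i)
         - dt * (\<Sum>i<N - 1. UpRUU N r v (i + 1) * (uhat v (i + 1) - uhat v i))
         + \<mu> * dt * dx * (\<Sum>i<N. ((v (i + 1) - v i) / dx)\<^sup>2)
         + dt * (\<Sum>i<N - 1. v (i + 1) * (pres a \<gamma> (r (i + 1)) - pres a \<gamma> (r i))) = 0"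
proof -
  define m where "m i = r i * uhat v i - r0 i * uhat v0 i" for i
  define G where "G = UpRUU N r v"
  define P where "P i = pres a \<gamma> (r i)" for i
  have node: "dx * (v (i + 1) * (m i + m (i + 1)) / 2) + dt / 2 * (v (i + 1) * (G (i + 2) - G i))
      - \<mu> * dt / dx * (v (i + 1) * (v i - 2 * v (i + 1) + v (i + 2)))
      + dt * (v (i + 1) * (P (i + 1) - P i)) = 0" if "i < N - 1" for i
  proof -
    have eq: "(m i + m (i + 1)) / 2 / dt + (G (i + 2) - G i) / (2 * dx)
        = \<mu> * (v i - 2 * v (i + 1) + v (i + 2)) / dx\<^sup>2 - (P (i + 1) - P i) / dx"
    proof -
      have avg: "(m i + m (i + 1)) / 2 = (r i * uhat v i + r (i + 1) * uhat v (i + 1)) / 2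
          - (r0 i * uhat v0 i + r0 (i + 1) * uhat v0 (i + 1)) / 2"
        by (simp add: m_def field_simps)
      from assms(1) that show ?thesis unfolding momentum_step_def G_def P_def avg by simp
    qed
    have "dx * (v (i + 1) * (m i + m (i + 1)) / 2) + dt / 2 * (v (i + 1) * (G (i + 2) - G i))
        - \<mu> * dt / dx * (v (i + 1) * (v i - 2 * v (i + 1) + v (i + 2)))
        + dt * (v (i + 1) * (P (i + 1) - P i))
        = dx * dt * v (i + 1) * (((m i + m (i + 1)) / 2 / dt + (G (i + 2) - G i) / (2 * dx))
            - (\<mu> * (v i - 2 * v (i + 1) + v (i + 2)) / dx\<^sup>2 - (P (i + 1) - P i) / dx))"
      using assms(2,3) by (simp add: field_simps power2_eq_square)
    with eq show ?thesis by simp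
  qed
  have "dx * (\<Sum>i<N - 1. v (i + 1) * (m i + m (i + 1)) / 2)
      + dt / 2 * (\<Sum>i<N - 1. v (i + 1) * (G (i + 2) - G i))
      - \<mu> * dt / dx * (\<Sum>i<N - 1. v (i + 1) * (v i - 2 * v (i + 1) + v (i + 2)))
      + dt * (\<Sum>i<N - 1. v (i + 1) * (P (i + 1) - P i)) = 0"
    using sum.neutral[of "{..<N - 1}", OF ballI, OF node]
    by (simp add: sum.distrib sum_subtractf sum_distrib_left)
  moreover have "(\<Sum>i<N - 1. v (i + 1) * (m i + m (i + 1)) / 2) = (\<Sum>i<N. m i * uhat v i)"
    using sum_node_average assms(4,5) .
  moreover have "(\<Sum>i<N - 1. v (i + 1) * (G (i + 2) - G i))
      = - 2 * (\<Sum>i<N - 1. G (i + 1) * (uhat v (i + 1) - uhat v i))"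
  proof -
    have "G 0 = 0" "G N = 0" by (simp_all add: G_def UpRUU_def)
    with assms(4,5) have "(\<Sum>i<N - 1. v (i + 1) * (G (i + 2) - G i))
        = (\<Sum>i<N - 1. G (i + 1) * (v i - v (i + 2)))"
      by (rule sum_centered_difference)
    also have "\<dots> = (\<Sum>i<N - 1. - 2 * (G (i + 1) * (uhat v (i + 1) - uhat v i)))"
      by (rule sum.cong) (simp_all add: uhat_def field_simps)
    finally show ?thesis by (simp only: sum_distrib_left)
  qed
  moreover have "\<mu> * dt / dx * (\<Sum>i<N - 1. v (i + 1) * (v i - 2 * v (i + 1) + v (i + 2)))
      = - (\<mu> * dt * dx * (\<Sum>i<N. ((v (i + 1) - v i) / dx)\<^sup>2))"
  proof -
    have "\<mu> * dt * dx * (\<Sum>i<N. ((v (i + 1) - v i) / dx)\<^sup>2)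
        = \<mu> * dt * dx / dx\<^sup>2 * (\<Sum>i<N. (v (i + 1) - v i)\<^sup>2)"
      by (simp add: power_divide sum_divide_distrib[symmetric])
    also have "\<mu> * dt * dx / dx\<^sup>2 = \<mu> * dt / dx"
      using assms(2) by (simp add: power2_eq_square)
    finally show ?thesis
      using sum_discrete_laplacian[of v N] assms(4,5) by simp
  qed
  ultimately show ?thesis
    by (simp add: m_def G_def P_def algebra_simps)
qed

lemma kinetic_balance:
  assumes "mass_step N dx dt r0 r v" "momentum_step \<mu> a \<gamma> N dx dt r0 v0 r v"
    and "dx \<noteq> 0" "dt \<noteq> 0" "v 0 = 0" "v N = 0" "\<forall>i<N. r i \<ge> 0"
  shows "dx * (\<Sum>i<N. r i * (uhat v i)\<^sup>2 / 2)
         + \<mu> * dt * dx * (\<Sum>i<N. ((v (i + 1) - v i) / dx)\<^sup>2)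
         + dt\<^sup>2 * dx / 2 * (\<Sum>i<N. r0 i * ((uhat v i - uhat v0 i) / dt)\<^sup>2)
         + dt * dx\<^sup>2 / 2 * (\<Sum>i<N - 1. \<bar>UpRU N r v (i + 1)\<bar> * ((uhat v (i + 1) - uhat v i) / dx)\<^sup>2)
         + dt * (\<Sum>i<N - 1. v (i + 1) * (pres a \<gamma> (r (i + 1)) - pres a \<gamma> (r i)))
         = dx * (\<Sum>i<N. r0 i * (uhat v0 i)\<^sup>2 / 2)"
proof -
  define w where "w = uhat v"
  define F where "F = UpRU N r v"
  define G where "G = UpRUU N r v"
  have cells: "dx * (\<Sum>i<N. (r i * w i - r0 i * uhat v0 i) * w i)
      = dx * (\<Sum>i<N. r i * (w i)\<^sup>2 / 2) - dx * (\<Sum>i<N. r0 i * (uhat v0 i)\<^sup>2 / 2)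
        + dx * (\<Sum>i<N. (w i)\<^sup>2 / 2 * (r i - r0 i))
        + dt\<^sup>2 * dx / 2 * (\<Sum>i<N. r0 i * ((w i - uhat v0 i) / dt)\<^sup>2)"
  proof -
    have cell: "(r i * w i - r0 i * uhat v0 i) * w i = r i * (w i)\<^sup>2 / 2 - r0 i * (uhat v0 i)\<^sup>2 / 2
        + (w i)\<^sup>2 / 2 * (r i - r0 i) + dt\<^sup>2 / 2 * (r0 i * ((w i - uhat v0 i) / dt)\<^sup>2)" for i
      using assms(4) by (simp add: field_simps power2_eq_square)
    show ?thesis
      by (simp only: cell sum.distrib sum_subtractf flip: sum_distrib_left) (simp add: algebra_simps)
  qed
  have nodes: "dt * (\<Sum>i<N - 1. F (i + 1) * ((w (i + 1))\<^sup>2 / 2 - (w i)\<^sup>2 / 2))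
      - dt * (\<Sum>i<N - 1. G (i + 1) * (w (i + 1) - w i))
      = dt * dx\<^sup>2 / 2 * (\<Sum>i<N - 1. \<bar>F (i + 1)\<bar> * ((w (i + 1) - w i) / dx)\<^sup>2)"
  proof -
    have node: "F (i + 1) * ((w (i + 1))\<^sup>2 / 2 - (w i)\<^sup>2 / 2) - G (i + 1) * (w (i + 1) - w i)
        = dx\<^sup>2 / 2 * (\<bar>F (i + 1)\<bar> * ((w (i + 1) - w i) / dx)\<^sup>2)" if "i < N - 1" for i
      using upwind_kinetic_identity[of "r i" "r (i + 1)" "v (i + 1)" "w (i + 1)" "w i"]
        assms(3,7) that
      by (simp add: F_def G_def UpRU_def UpRUU_def w_def power_divide field_simps)
    have "dt * (\<Sum>i<N - 1. F (i + 1) * ((w (i + 1))\<^sup>2 / 2 - (w i)\<^sup>2 / 2))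
        - dt * (\<Sum>i<N - 1. G (i + 1) * (w (i + 1) - w i))
        = dt * (\<Sum>i<N - 1. F (i + 1) * ((w (i + 1))\<^sup>2 / 2 - (w i)\<^sup>2 / 2) - G (i + 1) * (w (i + 1) - w i))"
      by (simp add: sum_subtractf right_diff_distrib)
    also have "\<dots> = dt * (\<Sum>i<N - 1. dx\<^sup>2 / 2 * (\<bar>F (i + 1)\<bar> * ((w (i + 1) - w i) / dx)\<^sup>2))"
      using node by (intro arg_cong[where f = "(*) dt"] sum.cong) simp_all
    finally show ?thesis by (simp add: sum_distrib_left mult.assoc)
  qed
  show ?thesis
    using momentum_step_tested[OF assms(2-6)] cells nodes
      mass_step_weighted_sum[OF assms(1,3,4), of "\<lambda>i. (w i)\<^sup>2 / 2"]
    by (simp add: w_def F_def G_def)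
qed

lemma pressure_balance:
  assumes "mass_step N dx dt r0 r v" "dx \<noteq> 0" "dt \<noteq> 0" "\<gamma> \<noteq> 1" "\<forall>i<N. r i > 0"
  shows "dx * (\<Sum>i<N. pres_potential a \<gamma> (r i))
         + dx * (\<Sum>i<N. bregman (pres_potential a \<gamma>) (enthalpy a \<gamma>) (r0 i) (r i))
         + dt * (\<Sum>i<N - 1. upwind_bregman (pres_potential a \<gamma>) (enthalpy a \<gamma>) (v (i + 1)) (r i) (r (i + 1)))
         = dx * (\<Sum>i<N. pres_potential a \<gamma> (r0 i))
         + dt * (\<Sum>i<N - 1. v (i + 1) * (pres a \<gamma> (r (i + 1)) - pres a \<gamma> (r i)))"
proof -
  define H where "H = pres_potential a \<gamma>"
  define h where "h = enthalpy a \<gamma>"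
  define F where "F = UpRU N r v"
  have "dx * (\<Sum>i<N. h (r i) * (r i - r0 i))
      = dx * (\<Sum>i<N. H (r i)) - dx * (\<Sum>i<N. H (r0 i)) + dx * (\<Sum>i<N. bregman H h (r0 i) (r i))"
    by (simp add: bregman_def sum.distrib sum_subtractf algebra_simps flip: sum_distrib_left)
  moreover have "dx * (\<Sum>i<N. h (r i) * (r i - r0 i)) = dt * (\<Sum>i<N - 1. F (i + 1) * (h (r (i + 1)) - h (r i)))"
    unfolding F_def by (rule mass_step_weighted_sum[OF assms(1-3)])
  moreover have "v (i + 1) * (pres a \<gamma> (r (i + 1)) - pres a \<gamma> (r i)) - F (i + 1) * (h (r (i + 1)) - h (r i))
      = upwind_bregman H h (v (i + 1)) (r i) (r (i + 1))" if "i < N - 1" for i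
  proof -
    have "F (i + 1) = r i * pospart (v (i + 1)) + r (i + 1) * negpart (v (i + 1))"
      using that by (simp add: F_def UpRU_def)
    moreover have "pres a \<gamma> (r j) = r j * h (r j) - H (r j)" if "j < N" for j
      using pres_legendre assms(4,5) that by (simp add: H_def h_def)
    ultimately show ?thesis
      using bregman_upwind_identity[of "pres a \<gamma>" "r i" h H "r (i + 1)" "v (i + 1)"] that by simp
  qed
  then have "dt * (\<Sum>i<N - 1. v (i + 1) * (pres a \<gamma> (r (i + 1)) - pres a \<gamma> (r i)))
      - dt * (\<Sum>i<N - 1. F (i + 1) * (h (r (i + 1)) - h (r i)))
      = dt * (\<Sum>i<N - 1. upwind_bregman H h (v (i + 1)) (r i) (r (i + 1)))"
    by (simp add: sum_subtractf[symmetric] flip: right_diff_distrib)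
  ultimately show ?thesis
    by (simp add: H_def h_def algebra_simps)
qed

lemma energy_step:
  assumes "mass_step N dx dt r0 r v" "momentum_step \<mu> a \<gamma> N dx dt r0 v0 r v"
    and "dx \<noteq> 0" "dt \<noteq> 0" "\<gamma> \<noteq> 1" "v 0 = 0" "v N = 0" "\<forall>i<N. r i > 0"
  shows "energy a \<gamma> N dx r v
         + \<mu> * dt * dx * (\<Sum>i<N. ((v (i + 1) - v i) / dx)\<^sup>2)
         + dx * (\<Sum>i<N. bregman (pres_potential a \<gamma>) (enthalpy a \<gamma>) (r0 i) (r i))
         + dt * (\<Sum>i<N - 1. upwind_bregman (pres_potential a \<gamma>) (enthalpy a \<gamma>) (v (i + 1)) (r i) (r (i + 1)))
         + dt\<^sup>2 * dx / 2 * (\<Sum>i<N. r0 i * ((uhat v i - uhat v0 i) / dt)\<^sup>2)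
         + dt * dx\<^sup>2 / 2 * (\<Sum>i<N - 1. \<bar>UpRU N r v (i + 1)\<bar> * ((uhat v (i + 1) - uhat v i) / dx)\<^sup>2)
         = energy a \<gamma> N dx r0 v0"
proof -
  have energy_split: "energy a \<gamma> N dx r' v'
      = dx * (\<Sum>i<N. r' i * (uhat v' i)\<^sup>2 / 2) + dx * (\<Sum>i<N. pres_potential a \<gamma> (r' i))" for r' v'
    by (simp add: energy_def pres_potential_def sum.distrib distrib_left)
  have nonneg: "\<forall>i<N. r i \<ge> 0" using assms(8) by (simp add: less_imp_le)
  show ?thesis
    unfolding energy_split
    using kinetic_balance[OF assms(1-4,6,7) nonneg] pressure_balance[OF assms(1,3-5,8), where a = a]
    by linarith
qed

lemma energy_step_taylor:
  assumes "mass_step N dx dt r0 r v" "momentum_step \<mu> a \<gamma> N dx dt r0 v0 r v"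
    and "dx \<noteq> 0" "dt \<noteq> 0" "\<gamma> \<noteq> 1" "v 0 = 0" "v N = 0" "\<forall>i<N. r i > 0"
    and rs: "\<And>i. i < N \<Longrightarrow> bregman (pres_potential a \<gamma>) (enthalpy a \<gamma>) (r0 i) (r i)
                  = pres2 a \<gamma> (rs i) / (2 * (\<gamma> - 1)) * (r0 i - r i)\<^sup>2"
    and \<theta>: "\<And>i. i < N - 1 \<Longrightarrow> upwind_bregman (pres_potential a \<gamma>) (enthalpy a \<gamma>) (v (i + 1)) (r i) (r (i + 1))
                  = \<bar>v (i + 1)\<bar> * pres2 a \<gamma> (\<theta> i) / (2 * (\<gamma> - 1)) * (r (i + 1) - r i)\<^sup>2"
  shows "energy a \<gamma> N dx r v
         + \<mu> * dt * dx * (\<Sum>i<N. ((v (i + 1) - v i) / dx)\<^sup>2)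
         + dt\<^sup>2 * dx / (2 * (\<gamma> - 1)) * (\<Sum>i<N. pres2 a \<gamma> (rs i) * ((r i - r0 i) / dt)\<^sup>2)
         + dt * dx\<^sup>2 / (2 * (\<gamma> - 1)) * (\<Sum>i<N - 1. pres2 a \<gamma> (\<theta> i) * ((r (i + 1) - r i) / dx)\<^sup>2 * \<bar>v (i + 1)\<bar>)
         + dt\<^sup>2 * dx / 2 * (\<Sum>i<N. r0 i * ((uhat v i - uhat v0 i) / dt)\<^sup>2)
         + dt * dx\<^sup>2 / 2 * (\<Sum>i<N - 1. \<bar>UpRU N r v (i + 1)\<bar> * ((uhat v (i + 1) - uhat v i) / dx)\<^sup>2)
         = energy a \<gamma> N dx r0 v0"
proof -
  have "dx * (\<Sum>i<N. bregman (pres_potential a \<gamma>) (enthalpy a \<gamma>) (r0 i) (r i))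
      = dt\<^sup>2 * dx / (2 * (\<gamma> - 1)) * (\<Sum>i<N. pres2 a \<gamma> (rs i) * ((r i - r0 i) / dt)\<^sup>2)"
    unfolding sum_distrib_left
    using assms(4,5) by (intro sum.cong) (simp_all add: rs field_simps power2_commute)
  moreover have "dt * (\<Sum>i<N - 1. upwind_bregman (pres_potential a \<gamma>) (enthalpy a \<gamma>) (v (i + 1)) (r i) (r (i + 1)))
      = dt * dx\<^sup>2 / (2 * (\<gamma> - 1)) * (\<Sum>i<N - 1. pres2 a \<gamma> (\<theta> i) * ((r (i + 1) - r i) / dx)\<^sup>2 * \<bar>v (i + 1)\<bar>)"
    unfolding sum_distrib_left
    using assms(3,5) by (intro sum.cong) (simp_all add: \<theta>[simplified] field_simps)
  ultimately show ?thesis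
    using energy_step[OF assms(1-8)] by linarith
qed

lemma time_taylor_points:
  fixes rho :: "nat \<Rightarrow> nat \<Rightarrow> real"
  assumes "\<forall>k\<le>M. \<forall>i<N. rho k i > 0" "\<gamma> > 1"
  obtains rs where "\<And>i k. k \<in> {1..M} \<and> i < N \<Longrightarrow> between (rho (k - 1) i) (rho k i) (rs i k) \<and>
    bregman (pres_potential a \<gamma>) (enthalpy a \<gamma>) (rho (k - 1) i) (rho k i)
      = pres2 a \<gamma> (rs i k) / (2 * (\<gamma> - 1)) * (rho (k - 1) i - rho k i)\<^sup>2"
proof -
  have "\<forall>i k. k \<in> {1..M} \<and> i < N \<longrightarrow> (\<exists>t. between (rho (k - 1) i) (rho k i) t \<and>
      bregman (pres_potential a \<gamma>) (enthalpy a \<gamma>) (rho (k - 1) i) (rho k i)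
        = pres2 a \<gamma> t / (2 * (\<gamma> - 1)) * (rho (k - 1) i - rho k i)\<^sup>2)"
  proof (intro allI impI bregman_pres_potential_taylor assms(2))
    fix i k assume "k \<in> {1..M} \<and> i < N"
    then have "k - 1 \<le> M" "k \<le> M" "i < N" by auto
    then show "rho (k - 1) i > 0" "rho k i > 0" using assms(1) by blast+
  qed
  then show ?thesis by (rule choice2) (rule that)
qed

lemma space_taylor_points:
  fixes rho u :: "nat \<Rightarrow> nat \<Rightarrow> real"
  assumes "\<forall>k\<le>M. \<forall>i<N. rho k i > 0" "\<gamma> > 1"
  obtains \<theta> where "\<And>i k. k \<in> {1..M} \<and> i < N - 1 \<Longrightarrow> between (rho k i) (rho k (i + 1)) (\<theta> i k) \<and>
    upwind_bregman (pres_potential a \<gamma>) (enthalpy a \<gamma>) (u k (i + 1)) (rho k i) (rho k (i + 1))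
      = \<bar>u k (i + 1)\<bar> * pres2 a \<gamma> (\<theta> i k) / (2 * (\<gamma> - 1)) * (rho k (i + 1) - rho k i)\<^sup>2"
proof -
  have "\<forall>i k. k \<in> {1..M} \<and> i < N - 1 \<longrightarrow> (\<exists>t. between (rho k i) (rho k (i + 1)) t \<and>
      upwind_bregman (pres_potential a \<gamma>) (enthalpy a \<gamma>) (u k (i + 1)) (rho k i) (rho k (i + 1))
        = \<bar>u k (i + 1)\<bar> * pres2 a \<gamma> t / (2 * (\<gamma> - 1)) * (rho k (i + 1) - rho k i)\<^sup>2)"
  proof (intro allI impI upwind_bregman_pres_potential_taylor assms(2))
    fix i k assume "k \<in> {1..M} \<and> i < N - 1"
    then have "k \<le> M" "i < N" "i + 1 < N" by auto
    then show "rho k i > 0" "rho k (i + 1) > 0" using assms(1) by blast+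
  qed
  then show ?thesis by (rule choice2) (rule that)
qed

lemma discrete_energy_identity:
  fixes rho u :: "nat \<Rightarrow> nat \<Rightarrow> real"
  assumes "num_solution \<mu> a \<gamma> L N M dx dt rho0 u0 rho u" "\<forall>k\<le>M. \<forall>i<N. rho k i > 0"
    and "dx \<noteq> 0" "dt \<noteq> 0" "\<gamma> \<noteq> 1" "m \<le> M"
    and rs: "\<And>i k. k \<in> {1..M} \<and> i < N \<Longrightarrow>
      bregman (pres_potential a \<gamma>) (enthalpy a \<gamma>) (rho (k - 1) i) (rho k i)
        = pres2 a \<gamma> (rs i k) / (2 * (\<gamma> - 1)) * (rho (k - 1) i - rho k i)\<^sup>2"
    and \<theta>: "\<And>i k. k \<in> {1..M} \<and> i < N - 1 \<Longrightarrow>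
      upwind_bregman (pres_potential a \<gamma>) (enthalpy a \<gamma>) (u k (i + 1)) (rho k i) (rho k (i + 1))
        = \<bar>u k (i + 1)\<bar> * pres2 a \<gamma> (\<theta> i k) / (2 * (\<gamma> - 1)) * (rho k (i + 1) - rho k i)\<^sup>2"
  shows "energy a \<gamma> N dx (rho m) (u m)
        + \<mu> * dt * dx * (\<Sum>k\<in>{1..m}. \<Sum>i<N. ((u k (i+1) - u k i) / dx)\<^sup>2)
        + dt\<^sup>2 * dx / (2 * (\<gamma> - 1)) * (\<Sum>k\<in>{1..m}. \<Sum>i<N.
              pres2 a \<gamma> (rs i k) * ((rho k i - rho (k-1) i) / dt)\<^sup>2)
        + dt * dx\<^sup>2 / (2 * (\<gamma> - 1)) * (\<Sum>k\<in>{1..m}. \<Sum>i<N-1.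
              pres2 a \<gamma> (\<theta> i k) * ((rho k (i+1) - rho k i) / dx)\<^sup>2 * \<bar>u k (i+1)\<bar>)
        + dt\<^sup>2 * dx / 2 * (\<Sum>k\<in>{1..m}. \<Sum>i<N.
              rho (k-1) i * ((uhat (u k) i - uhat (u (k-1)) i) / dt)\<^sup>2)
        + dt * dx\<^sup>2 / 2 * (\<Sum>k\<in>{1..m}. \<Sum>i<N-1.
              \<bar>UpRU N (rho k) (u k) (i+1)\<bar> * ((uhat (u k) (i+1) - uhat (u k) i) / dx)\<^sup>2)
        = energy a \<gamma> N dx (rho 0) (u 0)"
proof -
  define E where "E k = energy a \<gamma> N dx (rho k) (u k)" for k
  define D where "D k = \<mu> * dt * dx * (\<Sum>i<N. ((u k (i+1) - u k i) / dx)\<^sup>2)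
        + dt\<^sup>2 * dx / (2 * (\<gamma> - 1)) * (\<Sum>i<N. pres2 a \<gamma> (rs i k) * ((rho k i - rho (k-1) i) / dt)\<^sup>2)
        + dt * dx\<^sup>2 / (2 * (\<gamma> - 1)) * (\<Sum>i<N-1.
              pres2 a \<gamma> (\<theta> i k) * ((rho k (i+1) - rho k i) / dx)\<^sup>2 * \<bar>u k (i+1)\<bar>)
        + dt\<^sup>2 * dx / 2 * (\<Sum>i<N. rho (k-1) i * ((uhat (u k) i - uhat (u (k-1)) i) / dt)\<^sup>2)
        + dt * dx\<^sup>2 / 2 * (\<Sum>i<N-1.
              \<bar>UpRU N (rho k) (u k) (i+1)\<bar> * ((uhat (u k) (i+1) - uhat (u k) i) / dx)\<^sup>2)" for k
  have "E k + D k = E (k - 1)" if k: "k \<in> {1..M}" for k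
  proof -
    have "\<forall>i<N. rho k i > 0" using assms(2) k by simp
    with num_solution_step[OF assms(1) k] assms(3-5) rs[where k = k] \<theta>[where k = k] k show ?thesis
      unfolding E_def D_def
      using energy_step_taylor[of N dx dt "rho (k - 1)" "rho k" "u k" \<mu> a \<gamma> "u (k - 1)"
          "\<lambda>i. rs i k" "\<lambda>i. \<theta> i k"]
      by (simp add: add.assoc)
  qed
  with assms(6) have "E m + sum D {1..m} = E 0"
    by (intro add_sum_telescope) auto
  then show ?thesis
    by (simp add: E_def D_def sum.distrib sum_distrib_left add.assoc)
qed

theorem proposition3p3:
  fixes L \<mu> a \<gamma> T dx dt :: real and N M :: nat
    and rho0 u0 :: "real \<Rightarrow> real" and rho u :: "nat \<Rightarrow> nat \<Rightarrow> real"
  assumes "L > 0" "\<mu> > 0" "a > 0" "\<gamma> > 1" "T > 0" "N \<ge> 1" "M \<ge> 1"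
    and "dx = L / real N" "dt = T / real M"
    and "set_borel_measurable lborel {0<..<L} rho0"
    and "set_integrable lborel {0<..<L} (\<lambda>x. \<bar>rho0 x\<bar> powr \<gamma>)"
    and "\<forall>x\<in>{0<..<L}. rho0 x > 0"
    and "bounded (u0 ` {0..L})"
    and "num_solution \<mu> a \<gamma> L N M dx dt rho0 u0 rho u"
    and "\<forall>k\<le>M. \<forall>i<N. rho k i > 0"
  shows "\<forall>m\<in>{1..M}. \<exists>rs \<theta> :: nat \<Rightarrow> nat \<Rightarrow> real.
    (\<forall>k\<in>{1..m}. \<forall>i<N. between (rho (k-1) i) (rho k i) (rs i k)) \<and>
    (\<forall>k\<in>{1..m}. \<forall>i<N-1. between (rho k i) (rho k (i+1)) (\<theta> i k)) \<and>
    (let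
       N1 = dt\<^sup>2 * dx / (2 * (\<gamma> - 1)) * (\<Sum>k\<in>{1..m}. \<Sum>i<N.
              pres2 a \<gamma> (rs i k) * ((rho k i - rho (k-1) i) / dt)\<^sup>2);
       N2 = dt * dx\<^sup>2 / (2 * (\<gamma> - 1)) * (\<Sum>k\<in>{1..m}. \<Sum>i<N-1.
              pres2 a \<gamma> (\<theta> i k) * ((rho k (i+1) - rho k i) / dx)\<^sup>2 * \<bar>u k (i+1)\<bar>);
       N3 = dt\<^sup>2 * dx / 2 * (\<Sum>k\<in>{1..m}. \<Sum>i<N.
              rho (k-1) i * ((uhat (u k) i - uhat (u (k-1)) i) / dt)\<^sup>2);
       N4 = dt * dx\<^sup>2 / 2 * (\<Sum>k\<in>{1..m}. \<Sum>i<N-1.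
              \<bar>UpRU N (rho k) (u k) (i+1)\<bar> * ((uhat (u k) (i+1) - uhat (u k) i) / dx)\<^sup>2)
     in energy a \<gamma> N dx (rho m) (u m)
        + \<mu> * dt * dx * (\<Sum>k\<in>{1..m}. \<Sum>i<N. ((u k (i+1) - u k i) / dx)\<^sup>2)
        + N1 + N2 + N3 + N4
        = energy a \<gamma> N dx (rho 0) (u 0)
      \<and> N1 \<ge> 0 \<and> N2 \<ge> 0 \<and> N3 \<ge> 0 \<and> N4 \<ge> 0)"
proof -
  have dx: "dx > 0" and dt: "dt > 0" using assms(1,5-9) by simp_all
  obtain rs where rs: "\<And>i k. k \<in> {1..M} \<and> i < N \<Longrightarrow> between (rho (k - 1) i) (rho k i) (rs i k) \<and>
      bregman (pres_potential a \<gamma>) (enthalpy a \<gamma>) (rho (k - 1) i) (rho k i)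
        = pres2 a \<gamma> (rs i k) / (2 * (\<gamma> - 1)) * (rho (k - 1) i - rho k i)\<^sup>2"
    using time_taylor_points[OF assms(15,4)] by blast
  obtain \<theta> where \<theta>: "\<And>i k. k \<in> {1..M} \<and> i < N - 1 \<Longrightarrow> between (rho k i) (rho k (i + 1)) (\<theta> i k) \<and>
      upwind_bregman (pres_potential a \<gamma>) (enthalpy a \<gamma>) (u k (i + 1)) (rho k i) (rho k (i + 1))
        = \<bar>u k (i + 1)\<bar> * pres2 a \<gamma> (\<theta> i k) / (2 * (\<gamma> - 1)) * (rho k (i + 1) - rho k i)\<^sup>2"
    using space_taylor_points[OF assms(15,4)] by blast
  have rho_nonneg: "rho k i \<ge> 0" if "k \<le> M" "i < N" for k i
    using assms(15) that by (simp add: less_imp_le)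
  show ?thesis
    unfolding Let_def
  proof (intro ballI, rule exI[of _ rs], rule exI[of _ \<theta>],
      intro conjI discrete_energy_identity[OF assms(14,15)])
  qed (use rs \<theta> dx dt assms(3,4) in
        \<open>auto intro!: sum_nonneg mult_nonneg_nonneg divide_nonneg_nonneg pres2_nonneg rho_nonneg\<close>)
qed

end
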